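(* Let $n\ge 2$ and $g$ be integers with $\gcd(n,g)=1$. The permutation matrix $Q_g$ has $(1,1)$ entry $1$, so it can be written as $Q_g=\begin{pmatrix}1&\mathbf 0\\ \mathbf 0&\mathbf W\end{pmatrix}$ with $\mathbf W$ a permutation matrix of order $n-1$. Then $\mathbf W$ is a primary permutation matrix if and only if $n\nmid (g^{\ell_2}-g^{\ell_1})$ for all integers $0\le \ell_1<\ell_2\le n-2$.
   Context: For an integer $h$, $Q_h$ denotes the $n\times n$ matrix whose $(i,j)$ entry is $1$ if $j\equiv 1+(i-1)h\pmod n$ (indices taken in $\{1,\dots,n\}$) and $0$ otherwise; it is the $h$-circulant matrix with first row $(1,0,\dots,0)$, where an $h$-circulant matrix is one whose each row is the preceding row cyclically shifted $h$ places to the right. A permutation matrix of order $m$ is called primary if its associated permutation is a single cycle of length $m$. *)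

theory Defs
  imports "HOL-Number_Theory.Number_Theory"
begin

text \<open>Matrices are represented as functions nat \<Rightarrow> nat \<Rightarrow> int, indexed (as in the paper)
  by 1..m; entries outside this range are irrelevant.\<close>

text \<open>The h-circulant matrix Q_h of order n with first row (1,0,...,0):
  entry (i,j) is 1 iff j = 1 + (i-1)h (mod n).\<close>
definition Qmat :: "nat \<Rightarrow> int \<Rightarrow> nat \<Rightarrow> nat \<Rightarrow> int" where
  "Qmat n h i j = (if [int j = 1 + (int i - 1) * h] (mod int n) then 1 else 0)"

definition is_perm_matrix :: "(nat \<Rightarrow> nat \<Rightarrow> int) \<Rightarrow> nat \<Rightarrow> bool" where
  "is_perm_matrix M m \<longleftrightarrow>
     (\<forall>i\<in>{1..m}. \<forall>j\<in>{1..m}. M i j = 0 \<or> M i j = 1) \<and>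
     (\<forall>i\<in>{1..m}. \<exists>!j. j \<in> {1..m} \<and> M i j = 1) \<and>
     (\<forall>j\<in>{1..m}. \<exists>!i. i \<in> {1..m} \<and> M i j = 1)"

definition perm_of_matrix :: "(nat \<Rightarrow> nat \<Rightarrow> int) \<Rightarrow> nat \<Rightarrow> nat \<Rightarrow> nat" where
  "perm_of_matrix M m i = (THE j. j \<in> {1..m} \<and> M i j = 1)"

text \<open>Primary: the associated permutation is a single cycle of length m, i.e. some
  point's orbit x, \<sigma> x, ..., \<sigma>^(m-1) x exhausts {1..m}.\<close>
definition primary_perm_matrix :: "(nat \<Rightarrow> nat \<Rightarrow> int) \<Rightarrow> nat \<Rightarrow> bool" where
  "primary_perm_matrix M m \<longleftrightarrow> is_perm_matrix M m \<and>
     (\<exists>x\<in>{1..m}. (\<lambda>k. (perm_of_matrix M m ^^ k) x) ` {..<m} = {1..m})"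

end

theory Submission
  imports Defs
begin

text \<open>Deleting the first row and column of \<open>Q\<^sub>g\<close> leaves the permutation matrix of
  \<open>\<sigma>(i) = g i mod n\<close> on the nonzero residues \<open>1, \<dots>, n - 1\<close>, a bijection because \<open>g\<close> is a
  unit mod \<open>n\<close>. The \<open>\<sigma>\<close>-orbit of \<open>x\<close> is \<open>x g\<^sup>k mod n\<close>, so \<open>\<sigma>\<close> is a single \<open>(n - 1)\<close>-cycle iff some
  orbit takes \<open>n - 1\<close> distinct values for \<open>k < n - 1\<close>. For \<open>x = 1\<close> these values are the powers
  \<open>g\<^sup>k mod n\<close>, and a coincidence \<open>g\<^sup>a \<equiv> g\<^sup>b\<close> forces \<open>x g\<^sup>a \<equiv> x g\<^sup>b\<close> in every orbit.\<close>

lemma perm_of_matrix_eq: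
  assumes "\<And>j. j \<in> {1..m} \<Longrightarrow> M i j = 1 \<longleftrightarrow> j = \<sigma> i" and "\<sigma> i \<in> {1..m}"
  shows "perm_of_matrix M m i = \<sigma> i"
  unfolding perm_of_matrix_def using assms by (intro the_equality) auto

lemma is_perm_matrix_of_bij:
  assumes "bij_betw \<sigma> {1..m} {1..m}"
    and "\<And>i j. M i j = 0 \<or> M i j = 1"
    and "\<And>i j. i \<in> {1..m} \<Longrightarrow> j \<in> {1..m} \<Longrightarrow> M i j = 1 \<longleftrightarrow> j = \<sigma> i"
  shows "is_perm_matrix M m"
  unfolding is_perm_matrix_def
proof (intro conjI ballI)
  fix i assume "i \<in> {1..m}"
  moreover from this have "\<sigma> i \<in> {1..m}"
    by (rule bij_betw_apply[OF assms(1)])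
  ultimately show "\<exists>!j. j \<in> {1..m} \<and> M i j = 1"
    using assms(3) by blast
next
  fix j assume j: "j \<in> {1..m}"
  then obtain i where "i \<in> {1..m}" "j = \<sigma> i"
    using assms(1) by (metis bij_betw_def imageE)
  moreover have "inj_on \<sigma> {1..m}"
    using assms(1) by (rule bij_betw_imp_inj_on)
  ultimately show "\<exists>!i. i \<in> {1..m} \<and> M i j = 1"
    using assms(3)[OF _ j] by (metis inj_onD)
qed (use assms(2) in auto)

lemma perm_of_matrix_mem:
  assumes "is_perm_matrix M m" and "i \<in> {1..m}"
  shows "perm_of_matrix M m i \<in> {1..m}"
  using assms theI'[of "\<lambda>j. j \<in> {1..m} \<and> M i j = 1"]
  unfolding is_perm_matrix_def perm_of_matrix_def by blast

lemma funpow_mem: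
  assumes "f ` A \<subseteq> A" and "x \<in> A"
  shows "(f ^^ k) x \<in> A"
  using assms by (induction k) auto

lemma funpow_eq_on:
  assumes "f ` A \<subseteq> A" and "\<And>y. y \<in> A \<Longrightarrow> f y = h y" and "x \<in> A"
  shows "(f ^^ k) x = (h ^^ k) x"
proof (induction k)
  case (Suc k)
  have "(f ^^ Suc k) x = h ((f ^^ k) x)"
    using assms(2) funpow_mem[OF assms(1,3)] by simp
  with Suc show ?case by simp
qed simp

lemma primary_perm_matrix_iff_inj_on_orbit:
  assumes "is_perm_matrix M m"
  shows "primary_perm_matrix M m \<longleftrightarrow>
    (\<exists>x\<in>{1..m}. inj_on (\<lambda>k. (perm_of_matrix M m ^^ k) x) {..<m})"
proof -
  let ?\<sigma> = "perm_of_matrix M m"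
  have "?\<sigma> ` {1..m} \<subseteq> {1..m}"
    using perm_of_matrix_mem[OF assms] by blast
  have orbit_iff: "(\<lambda>k. (?\<sigma> ^^ k) x) ` {..<m} = {1..m} \<longleftrightarrow> inj_on (\<lambda>k. (?\<sigma> ^^ k) x) {..<m}"
    if "x \<in> {1..m}" for x
  proof -
    have "(\<lambda>k. (?\<sigma> ^^ k) x) ` {..<m} \<subseteq> {1..m}"
      using funpow_mem[OF \<open>?\<sigma> ` {1..m} \<subseteq> {1..m}\<close> that] by (rule image_subsetI)
    then have eq_if_card: "card ((\<lambda>k. (?\<sigma> ^^ k) x) ` {..<m}) = card {1..m} \<Longrightarrow>
               (\<lambda>k. (?\<sigma> ^^ k) x) ` {..<m} = {1..m}"
      by (rule card_subset_eq[OF finite_atLeastAtMost])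
    show ?thesis
    proof
      assume "(\<lambda>k. (?\<sigma> ^^ k) x) ` {..<m} = {1..m}"
      then show "inj_on (\<lambda>k. (?\<sigma> ^^ k) x) {..<m}"
        by (simp add: inj_on_iff_eq_card)
    next
      assume "inj_on (\<lambda>k. (?\<sigma> ^^ k) x) {..<m}"
      then show "(\<lambda>k. (?\<sigma> ^^ k) x) ` {..<m} = {1..m}"
        by (intro eq_if_card) (simp add: card_image)
    qed
  qed
  have "(\<exists>x\<in>{1..m}. (\<lambda>k. (?\<sigma> ^^ k) x) ` {..<m} = {1..m}) \<longleftrightarrow>
        (\<exists>x\<in>{1..m}. inj_on (\<lambda>k. (?\<sigma> ^^ k) x) {..<m})"
    using orbit_iff by (rule bex_cong[OF refl])
  with assms show ?thesis
    unfolding primary_perm_matrix_def by simp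
qed

definition mul_mod :: "nat \<Rightarrow> int \<Rightarrow> nat \<Rightarrow> nat" where
  "mul_mod n g i = nat ((int i * g) mod int n)"

lemma funpow_mul_mod:
  assumes "x < n"
  shows "(mul_mod n g ^^ k) x = nat ((int x * g ^ k) mod int n)"
proof (induction k)
  case (Suc k)
  have "(mul_mod n g ^^ Suc k) x = mul_mod n g (nat ((int x * g ^ k) mod int n))"
    using Suc by simp
  also have "\<dots> = nat ((int x * g ^ k) mod int n * g mod int n)"
    using assms by (simp add: mul_mod_def)
  also have "\<dots> = nat ((int x * g ^ Suc k) mod int n)"
    by (metis mod_mult_left_eq mult.assoc power_Suc2)
  finally show ?case .
qed (simp add: assms)

lemma mul_pow_mod_mem:
  assumes "coprime (int n) g" and "x \<in> {1..n-1}"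
  shows "nat ((int x * g ^ k) mod int n) \<in> {1..n-1}"
proof -
  have "\<not> int n dvd int x"
    using assms(2) by (auto dest: dvd_imp_le)
  then have "\<not> int n dvd int x * g ^ k"
    using assms(1) by (simp add: coprime_dvd_mult_left_iff)
  moreover have "n > 0"
    using assms(2) by auto
  ultimately have "0 < (int x * g ^ k) mod int n" "(int x * g ^ k) mod int n < int n"
    using pos_mod_sign[of "int n" "int x * g ^ k"] by (auto simp: dvd_eq_mod_eq_0 order_le_less)
  then show ?thesis
    by auto
qed

lemma mul_mod_mem:
  assumes "coprime (int n) g" and "x \<in> {1..n-1}"
  shows "mul_mod n g x \<in> {1..n-1}"
  using mul_pow_mod_mem[OF assms, of 1] by (simp add: mul_mod_def)

lemma bij_betw_mul_mod:
  assumes "coprime (int n) g"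
  shows "bij_betw (mul_mod n g) {1..n-1} {1..n-1}"
proof -
  have "inj_on (mul_mod n g) {1..n-1}"
  proof (rule inj_onI)
    fix i j assume i: "i \<in> {1..n-1}" and j: "j \<in> {1..n-1}"
      and "mul_mod n g i = mul_mod n g j"
    moreover have "n > 0"
      using i by auto
    ultimately have "[int i * g = int j * g] (mod int n)"
      by (simp add: mul_mod_def cong_def eq_nat_nat_iff)
    then have "[int i = int j] (mod int n)"
      using assms by (simp add: cong_mult_rcancel coprime_commute)
    moreover have "i < n" "j < n"
      using i j by auto
    ultimately show "i = j"
      using cong_less_imp_eq_int[of "int i" "int n" "int j"] by simp
  qed
  moreover have "mul_mod n g ` {1..n-1} \<subseteq> {1..n-1}"
    using mul_mod_mem[OF assms] by blast
  ultimately show ?thesis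
    by (simp add: bij_betw_def endo_inj_surj)
qed

lemma Qmat_0_or_1: "Qmat n h i j = 0 \<or> Qmat n h i j = 1"
  by (simp add: Qmat_def)

lemma Qmat_minor_eq_1_iff:
  assumes "j < n"
  shows "Qmat n g (i + 1) (j + 1) = 1 \<longleftrightarrow> j = mul_mod n g i"
proof -
  have "Qmat n g (i + 1) (j + 1) = 1 \<longleftrightarrow> [int j = int i * g] (mod int n)"
    unfolding Qmat_def using cong_add_rcancel[of "int j" 1 "int i * g"]
    by (simp add: add.commute)
  also have "\<dots> \<longleftrightarrow> j = mul_mod n g i"
    using assms by (auto simp: cong_def mul_mod_def nat_eq_iff)
  finally show ?thesis .
qed

lemma is_perm_matrix_Qmat_minor:
  assumes "coprime (int n) g"
  shows "is_perm_matrix (\<lambda>i j. Qmat n g (i + 1) (j + 1)) (n - 1)"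
proof (rule is_perm_matrix_of_bij[OF bij_betw_mul_mod[OF assms]])
  fix i j :: nat assume "j \<in> {1..n-1}"
  then show "Qmat n g (i + 1) (j + 1) = 1 \<longleftrightarrow> j = mul_mod n g i"
    by (intro Qmat_minor_eq_1_iff) auto
qed (rule Qmat_0_or_1)

lemma funpow_perm_of_Qmat_minor:
  assumes "coprime (int n) g" and "x \<in> {1..n-1}"
  shows "(perm_of_matrix (\<lambda>i j. Qmat n g (i + 1) (j + 1)) (n - 1) ^^ k) x =
    nat ((int x * g ^ k) mod int n)"
proof -
  let ?W = "\<lambda>i j. Qmat n g (i + 1) (j + 1)"
  have "perm_of_matrix ?W (n - 1) ` {1..n-1} \<subseteq> {1..n-1}"
    using perm_of_matrix_mem[OF is_perm_matrix_Qmat_minor[OF assms(1)]] by blast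
  moreover have "perm_of_matrix ?W (n - 1) i = mul_mod n g i" if "i \<in> {1..n-1}" for i
  proof (rule perm_of_matrix_eq)
    fix j :: nat assume "j \<in> {1..n-1}"
    then show "Qmat n g (i + 1) (j + 1) = 1 \<longleftrightarrow> j = mul_mod n g i"
      by (intro Qmat_minor_eq_1_iff) auto
  qed (rule mul_mod_mem[OF assms(1) that])
  ultimately have "(perm_of_matrix ?W (n - 1) ^^ k) x = (mul_mod n g ^^ k) x"
    using assms(2) by (rule funpow_eq_on)
  moreover have "x < n"
    using assms(2) by auto
  ultimately show ?thesis
    by (simp add: funpow_mul_mod)
qed

lemma Qmat_first_row_col_eq_0:
  assumes "coprime (int n) g" and "j \<in> {2..n}"
  shows "Qmat n g 1 j = 0 \<and> Qmat n g j 1 = 0"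
proof -
  have j: "j - 1 \<in> {1..n-1}" "j = (j - 1) + 1"
    using assms(2) by auto
  have "Qmat n g (0 + 1) ((j - 1) + 1) = 1 \<longleftrightarrow> j - 1 = mul_mod n g 0"
    using j by (intro Qmat_minor_eq_1_iff) auto
  moreover have "Qmat n g ((j - 1) + 1) (0 + 1) = 1 \<longleftrightarrow> 0 = mul_mod n g (j - 1)"
    using j by (intro Qmat_minor_eq_1_iff) auto
  moreover have "mul_mod n g 0 = 0" "mul_mod n g (j - 1) \<noteq> 0"
    using mul_mod_mem[OF assms(1) j(1)] by (auto simp: mul_mod_def)
  ultimately have "Qmat n g 1 j \<noteq> 1" "Qmat n g j 1 \<noteq> 1"
    using j by auto
  then show ?thesis
    using Qmat_0_or_1 by metis
qed

lemma inj_on_pow_mod_iff: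
  fixes g d :: int
  shows "inj_on (\<lambda>k. g ^ k mod d) {..<N} \<longleftrightarrow>
    (\<forall>l1 l2. l1 < l2 \<and> l2 < N \<longrightarrow> \<not> d dvd g ^ l2 - g ^ l1)"
proof
  assume inj: "inj_on (\<lambda>k. g ^ k mod d) {..<N}"
  show "\<forall>l1 l2. l1 < l2 \<and> l2 < N \<longrightarrow> \<not> d dvd g ^ l2 - g ^ l1"
  proof (intro allI impI notI)
    fix l1 l2 assume l: "l1 < l2 \<and> l2 < N" and "d dvd g ^ l2 - g ^ l1"
    then have "g ^ l2 mod d = g ^ l1 mod d"
      by (simp add: mod_eq_dvd_iff)
    with inj l have "l2 = l1"
      by (auto dest: inj_onD)
    with l show False
      by simp
  qed
next
  assume "\<forall>l1 l2. l1 < l2 \<and> l2 < N \<longrightarrow> \<not> d dvd g ^ l2 - g ^ l1"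
  then show "inj_on (\<lambda>k. g ^ k mod d) {..<N}"
    by (intro linorder_inj_onI') (auto simp: mod_eq_dvd_iff dvd_diff_commute)
qed

lemma ex_inj_on_orbit_iff:
  assumes "n \<ge> 2"
  shows "(\<exists>x\<in>{1..n-1}. inj_on (\<lambda>k. nat ((int x * g ^ k) mod int n)) K) \<longleftrightarrow>
    inj_on (\<lambda>k. g ^ k mod int n) K"
proof
  assume "\<exists>x\<in>{1..n-1}. inj_on (\<lambda>k. nat ((int x * g ^ k) mod int n)) K"
  then obtain x where "inj_on (\<lambda>k. nat ((int x * g ^ k) mod int n)) K"
    by blast
  then have "inj_on ((\<lambda>r. nat ((int x * r) mod int n)) \<circ> (\<lambda>k. g ^ k mod int n)) K"
    by (simp add: comp_def mod_mult_right_eq)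
  then show "inj_on (\<lambda>k. g ^ k mod int n) K"
    by (rule inj_on_imageI2)
next
  assume inj: "inj_on (\<lambda>k. g ^ k mod int n) K"
  have "nat (a mod int n) = nat (b mod int n) \<longleftrightarrow> a mod int n = b mod int n" for a b
    using assms by (simp add: eq_nat_nat_iff)
  with inj have "inj_on (\<lambda>k. nat ((int 1 * g ^ k) mod int n)) K"
    by (simp add: inj_on_def)
  moreover have "1 \<in> {1..n-1}"
    using assms by simp
  ultimately show "\<exists>x\<in>{1..n-1}. inj_on (\<lambda>k. nat ((int x * g ^ k) mod int n)) K"
    by blast
qed

theorem mainTheorem2:
  fixes n :: nat and g :: int
  assumes "n \<ge> 2" and "coprime (int n) g"
  defines "W \<equiv> (\<lambda>i j. Qmat n g (i + 1) (j + 1))"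
  shows "Qmat n g 1 1 = 1 \<and> (\<forall>j\<in>{2..n}. Qmat n g 1 j = 0 \<and> Qmat n g j 1 = 0)
         \<and> is_perm_matrix W (n - 1)
         \<and> (primary_perm_matrix W (n - 1) \<longleftrightarrow>
             (\<forall>l1 l2 :: nat. l1 < l2 \<and> l2 \<le> n - 2 \<longrightarrow> \<not> (int n dvd g ^ l2 - g ^ l1)))"
proof -
  have perm: "is_perm_matrix W (n - 1)"
    unfolding W_def using assms(2) by (rule is_perm_matrix_Qmat_minor)
  have "primary_perm_matrix W (n - 1) \<longleftrightarrow>
        (\<exists>x\<in>{1..n-1}. inj_on (\<lambda>k. (perm_of_matrix W (n - 1) ^^ k) x) {..<n-1})"
    by (rule primary_perm_matrix_iff_inj_on_orbit[OF perm])
  also have "\<dots> \<longleftrightarrow> (\<exists>x\<in>{1..n-1}. inj_on (\<lambda>k. nat ((int x * g ^ k) mod int n)) {..<n-1})"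
    unfolding W_def using funpow_perm_of_Qmat_minor[OF assms(2)]
    by (intro bex_cong refl inj_on_cong)
  also have "\<dots> \<longleftrightarrow> inj_on (\<lambda>k. g ^ k mod int n) {..<n-1}"
    using assms(1) by (rule ex_inj_on_orbit_iff)
  also have "\<dots> \<longleftrightarrow> (\<forall>l1 l2 :: nat. l1 < l2 \<and> l2 \<le> n - 2 \<longrightarrow> \<not> (int n dvd g ^ l2 - g ^ l1))"
  proof -
    have "l2 < n - 1 \<longleftrightarrow> l2 \<le> n - 2" for l2
      using assms(1) by arith
    then show ?thesis
      by (simp only: inj_on_pow_mod_iff)
  qed
  finally show ?thesis
    using perm Qmat_first_row_col_eq_0[OF assms(2)] by (simp add: Qmat_def)
qed

end
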